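(* Let $X$ be a complex Banach space and $\Gamma\subset\mathcal{B}(X)$ such that $TS\in\Gamma$ for all $T,S\in\Gamma$. Let $\lambda:\Gamma\to\mathbb{T}$, $T\mapsto\lambda_T$, satisfy $\lambda_{TS}=\lambda_T\lambda_S$ for all $T,S\in\Gamma$, where $\mathbb{T}=\{\alpha\in\mathbb{C}:|\alpha|=1\}$. Let $\Gamma_1=\{\lambda_TT: T\in\Gamma\}$. Then $\operatorname{Rec}(\Gamma)=\operatorname{Rec}(\Gamma_1)$.
   Context: $\mathcal{B}(X)$ denotes the algebra of bounded linear operators on $X$. For $\Gamma\subset\mathcal{B}(X)$, a vector $x\in X\setminus\{0\}$ is called recurrent for $\Gamma$ if there exists a sequence $(T_k)_{k\geq 1}$ of elements of $\Gamma$ such that $T_kx\to x$ as $k\to\infty$. $\operatorname{Rec}(\Gamma)$ denotes the set of all recurrent vectors for $\Gamma$. *)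

theory Defs
  imports "HOL-Analysis.Analysis"
begin

text \<open>A complex Banach space: a real Banach space 'a together with a complex scalar
multiplication sc extending the real one, satisfying the module axioms and
norm (sc c x) = cmod c * norm x.\<close>
definition complex_scaling :: "(complex \<Rightarrow> 'a::banach \<Rightarrow> 'a) \<Rightarrow> bool" where
  "complex_scaling sc \<longleftrightarrow>
     (\<forall>a b x. sc a (sc b x) = sc (a * b) x) \<and>
     (\<forall>a x y. sc a (x + y) = sc a x + sc a y) \<and>
     (\<forall>a b x. sc (a + b) x = sc a x + sc b x) \<and>
     (\<forall>r x. sc (complex_of_real r) x = r *\<^sub>R x) \<and>
     (\<forall>a x. norm (sc a x) = cmod a * norm x)"

definition bounded_ops :: "(complex \<Rightarrow> 'a::banach \<Rightarrow> 'a) \<Rightarrow> ('a \<Rightarrow> 'a) set" where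
  "bounded_ops sc = {T. bounded_linear T \<and> (\<forall>c x. T (sc c x) = sc c (T x))}"

definition Rec :: "('a::real_normed_vector \<Rightarrow> 'a) set \<Rightarrow> 'a set" where
  "Rec \<Gamma> = {x. x \<noteq> 0 \<and> (\<exists>T :: nat \<Rightarrow> 'a \<Rightarrow> 'a. (\<forall>k. T k \<in> \<Gamma>) \<and> (\<lambda>k. T k x) \<longlonglongrightarrow> x)}"

end

theory Submission
  imports Defs
begin

text \<open>For \<open>x \<noteq> 0\<close> consider the pairs \<open>(a, b)\<close> of scalars such that \<open>(a, b x)\<close> is a limit of
  \<open>(\<lambda>\<^sub>S, S x)\<close> with \<open>S \<in> \<Gamma>\<close>. Recurrence of \<open>x\<close> for \<open>\<Gamma>\<close> puts some \<open>(\<mu>, 1)\<close> with \<open>|\<mu>| = 1\<close>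
  into this set, recurrence for \<open>\<Gamma>\<^sub>1\<close> some \<open>(\<mu>, \<mu>\<^sup>*)\<close>; conversely \<open>(1, 1)\<close> in the set makes
  \<open>x\<close> recurrent for both. The set is closed and, as \<open>\<Gamma>\<close> is a semigroup and \<open>\<lambda>\<close> is multiplicative,
  closed under coordinatewise multiplication. A closed subsemigroup of the torus \<open>\<bbbT>\<^sup>2\<close> containing
  \<open>(a, b)\<close> contains \<open>(1, 1)\<close>: the powers \<open>(a\<^sup>n, b\<^sup>n)\<close> converge along a subsequence, so quotients of
  consecutive terms of that subsequence, which are again powers, tend to \<open>(1, 1)\<close>.\<close>

lemma unimodular_powers_return_to_one:
  fixes a b :: "'a::{real_normed_field, heine_borel}"
  assumes "norm a = 1" "norm b = 1"
  obtains m :: "nat \<Rightarrow> nat" where "\<And>k. m k > 0" "(\<lambda>k. a ^ m k) \<longlonglongrightarrow> 1" "(\<lambda>k. b ^ m k) \<longlonglongrightarrow> 1"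
proof -
  have sphere: "compact (sphere (0::'a) 1)"
    by (simp add: compact_eq_bounded_closed)
  have "seq_compact (sphere (0::'a) 1 \<times> sphere (0::'a) 1)"
    by (intro compact_imp_seq_compact compact_Times sphere)
  moreover have "\<forall>n. (a ^ n, b ^ n) \<in> sphere 0 1 \<times> sphere 0 1"
    using assms by (simp add: norm_power)
  ultimately obtain L r where L: "L \<in> sphere 0 1 \<times> sphere 0 1" and r: "strict_mono r"
    and lim_L: "((\<lambda>n. (a ^ n, b ^ n)) \<circ> r) \<longlonglongrightarrow> L"
    by (rule seq_compactE)
  obtain A B where AB: "(A, B) \<in> sphere 0 1 \<times> sphere 0 1"
    and lim: "(\<lambda>k. (a ^ r k, b ^ r k)) \<longlonglongrightarrow> (A, B)"
    using L lim_L by (cases L) (simp add: o_def)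
  define m where "m k = r (Suc k) - r k" for k
  have "m k > 0" for k
    using r by (simp add: m_def strict_mono_Suc_iff)
  have return: "(\<lambda>k. c ^ m k) \<longlonglongrightarrow> 1"
    if "c \<noteq> 0" "C \<noteq> 0" "(\<lambda>k. c ^ r k) \<longlonglongrightarrow> C" for c C :: 'a
  proof -
    have "c ^ m k = c ^ r (Suc k) / c ^ r k" for k
      using \<open>c \<noteq> 0\<close> r by (simp add: m_def power_diff strict_mono_leD)
    moreover have "(\<lambda>k. c ^ r (Suc k) / c ^ r k) \<longlonglongrightarrow> C / C"
      using that by (intro tendsto_divide LIMSEQ_Suc[where f = "\<lambda>k. c ^ r k"])
    ultimately show ?thesis
      using \<open>C \<noteq> 0\<close> by simp
  qed
  have "(\<lambda>k. a ^ r k) \<longlonglongrightarrow> A" "(\<lambda>k. b ^ r k) \<longlonglongrightarrow> B"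
    using tendsto_fst[OF lim] tendsto_snd[OF lim] by simp_all
  moreover have "a \<noteq> 0" "b \<noteq> 0" "A \<noteq> 0" "B \<noteq> 0"
    using assms AB by auto
  ultimately show thesis
    using that \<open>\<And>k. m k > 0\<close> return by blast
qed

lemma one_mem_closed_subsemigroup_of_torus:
  fixes K :: "('a::{real_normed_field, heine_borel} \<times> 'a) set"
  assumes "closed K"
    and mult: "\<And>a b a' b'. (a, b) \<in> K \<Longrightarrow> (a', b') \<in> K \<Longrightarrow> (a * a', b * b') \<in> K"
    and "(a, b) \<in> K" "norm a = 1" "norm b = 1"
  shows "(1, 1) \<in> K"
proof -
  have powers: "(a ^ Suc n, b ^ Suc n) \<in> K" for n
    by (induction n) (use assms(3) mult in auto)
  obtain m where m: "\<And>k. m k > 0" "(\<lambda>k. a ^ m k) \<longlonglongrightarrow> 1" "(\<lambda>k. b ^ m k) \<longlonglongrightarrow> 1"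
    using unimodular_powers_return_to_one assms(4,5) by blast
  have "(a ^ m k, b ^ m k) \<in> K" for k
    using powers[of "m k - 1"] m(1)[of k] by simp
  moreover have "(\<lambda>k. (a ^ m k, b ^ m k)) \<longlonglongrightarrow> (1, 1)"
    using m(2,3) by (rule tendsto_Pair)
  ultimately show ?thesis
    by (rule closed_sequentially[OF \<open>closed K\<close>])
qed

locale complex_scalar_multiplication =
  fixes sc :: "complex \<Rightarrow> 'a::banach \<Rightarrow> 'a"
  assumes complex_scaling: "complex_scaling sc"
begin

lemma sc_sc: "sc a (sc b x) = sc (a * b) x"
  and sc_add_right: "sc a (x + y) = sc a x + sc a y"
  and sc_add_left: "sc (a + b) x = sc a x + sc b x"
  and sc_of_real: "sc (complex_of_real r) x = r *\<^sub>R x"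
  and norm_sc: "norm (sc a x) = cmod a * norm x"
  using complex_scaling unfolding complex_scaling_def by blast+

lemma sc_one [simp]: "sc 1 x = x"
  using sc_of_real[of 1 x] by simp

sublocale sc: bounded_bilinear sc
proof
  show "sc (r *\<^sub>R a) x = r *\<^sub>R sc a x" "sc a (r *\<^sub>R x) = r *\<^sub>R sc a x" for r a x
    using sc_sc[of "complex_of_real r" a x] sc_sc[of a "complex_of_real r" x]
    by (simp_all add: scaleR_conv_of_real sc_of_real mult.commute)
  show "\<exists>K. \<forall>a x. norm (sc a x) \<le> norm a * norm x * K"
    by (rule exI[of _ 1]) (simp add: norm_sc)
qed (simp_all add: sc_add_left sc_add_right)

end

locale unimodular_character = complex_scalar_multiplication sc
  for sc :: "complex \<Rightarrow> 'a::banach \<Rightarrow> 'a" +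
  fixes G :: "('a \<Rightarrow> 'a) set"
    and lam :: "('a \<Rightarrow> 'a) \<Rightarrow> complex"
  assumes bounded_ops: "G \<subseteq> bounded_ops sc"
    and comp_closed: "T \<in> G \<Longrightarrow> S \<in> G \<Longrightarrow> T \<circ> S \<in> G"
    and unimodular: "T \<in> G \<Longrightarrow> cmod (lam T) = 1"
    and multiplicative: "T \<in> G \<Longrightarrow> S \<in> G \<Longrightarrow> lam (T \<circ> S) = lam T * lam S"
begin

abbreviation twisted :: "('a \<Rightarrow> 'a) set" where
  "twisted \<equiv> (\<lambda>T. (\<lambda>x. sc (lam T) (T x))) ` G"

definition orbit :: "'a \<Rightarrow> (complex \<times> 'a) set" where
  "orbit x = (\<lambda>S. (lam S, S x)) ` G"

definition limit_phases :: "'a \<Rightarrow> (complex \<times> complex) set" where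
  "limit_phases x = {(a, b). (a, sc b x) \<in> closure (orbit x)}"

lemma bounded_linear_op: "S \<in> G \<Longrightarrow> bounded_linear S"
  and op_sc: "S \<in> G \<Longrightarrow> S (sc c y) = sc c (S y)"
  using bounded_ops unfolding bounded_ops_def by blast+

lemma closed_limit_phases: "closed (limit_phases x)"
proof -
  have "continuous_on UNIV (\<lambda>p. (fst p, sc (snd p) x))"
    by (intro continuous_intros sc.continuous_on)
  then have "closed ((\<lambda>p. (fst p, sc (snd p) x)) -` closure (orbit x))"
    by (rule closed_vimage[OF closed_closure])
  moreover have "limit_phases x = (\<lambda>p. (fst p, sc (snd p) x)) -` closure (orbit x)"
    by (auto simp: limit_phases_def)
  ultimately show ?thesis
    by simp
qed

lemma closure_orbit_invariant:
  assumes "S \<in> G"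
  shows "(\<lambda>p. (lam S * fst p, S (snd p))) ` closure (orbit x) \<subseteq> closure (orbit x)"
proof (rule image_closure_subset)
  show "continuous_on (closure (orbit x)) (\<lambda>p. (lam S * fst p, S (snd p)))"
    by (intro continuous_intros bounded_linear.continuous_on[OF bounded_linear_op[OF assms]])
  show "(\<lambda>p. (lam S * fst p, S (snd p))) ` orbit x \<subseteq> closure (orbit x)"
    using assms closure_subset
    by (force simp: orbit_def intro: comp_closed multiplicative[symmetric])
qed simp

lemma limit_phases_mult:
  assumes "(a, b) \<in> limit_phases x" "(a', b') \<in> limit_phases x"
  shows "(a * a', b * b') \<in> limit_phases x"
proof -
  let ?\<psi> = "\<lambda>p. (fst p * a', sc b' (snd p))"
  have "?\<psi> ` orbit x = (\<lambda>S. (lam S * a', sc b' (S x))) ` G"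
    by (simp add: orbit_def image_image)
  txt \<open>Each \<open>S\<close> is fixed before \<open>(a', b')\<close> is approximated, so no bound on \<open>\<Gamma>\<close> uniform
    in \<open>S\<close> is needed.\<close>
  also have "\<dots> \<subseteq> closure (orbit x)"
  proof (rule image_subsetI)
    fix S assume "S \<in> G"
    have "(lam S * a', S (sc b' x)) \<in> closure (orbit x)"
      using closure_orbit_invariant[OF \<open>S \<in> G\<close>] assms(2) by (force simp: limit_phases_def)
    then show "(lam S * a', sc b' (S x)) \<in> closure (orbit x)"
      by (simp add: op_sc \<open>S \<in> G\<close>)
  qed
  finally have "?\<psi> ` orbit x \<subseteq> closure (orbit x)" .
  then have "?\<psi> ` closure (orbit x) \<subseteq> closure (orbit x)"
    by (intro image_closure_subset closed_closure continuous_intros sc.continuous_on)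
  then show ?thesis
    using assms(1) by (force simp: limit_phases_def sc_sc mult.commute)
qed

lemma one_limit_phase:
  assumes "(a, b) \<in> limit_phases x" "cmod a = 1" "cmod b = 1"
  shows "(1, 1) \<in> limit_phases x"
  using one_mem_closed_subsemigroup_of_torus[OF closed_limit_phases] limit_phases_mult assms
  by blast

lemma convergent_phase_subseq:
  fixes S :: "nat \<Rightarrow> 'a \<Rightarrow> 'a"
  assumes "\<And>k. S k \<in> G"
  obtains \<mu> r where "cmod \<mu> = 1" "strict_mono r" "(\<lambda>k. lam (S (r k))) \<longlonglongrightarrow> \<mu>"
proof -
  have "seq_compact (sphere (0::complex) 1)"
    by (intro compact_imp_seq_compact compact_sphere)
  moreover have "\<forall>k. lam (S k) \<in> sphere 0 1"
    using assms unimodular by simp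
  ultimately obtain \<mu> r where "\<mu> \<in> sphere 0 1" "strict_mono r"
    "((\<lambda>k. lam (S k)) \<circ> r) \<longlonglongrightarrow> \<mu>"
    by (rule seq_compactE)
  then show thesis
    using that[of \<mu> r] by (simp add: o_def)
qed

lemma limit_in_closure_orbit:
  fixes S :: "nat \<Rightarrow> 'a \<Rightarrow> 'a"
  assumes "\<And>k. S k \<in> G" "(\<lambda>k. lam (S k)) \<longlonglongrightarrow> \<mu>" "(\<lambda>k. S k x) \<longlonglongrightarrow> y"
  shows "(\<mu>, y) \<in> closure (orbit x)"
proof (rule closed_sequentially[OF closed_closure, where f = "\<lambda>k. (lam (S k), S k x)"])
  show "(lam (S k), S k x) \<in> closure (orbit x)" for k
    using assms(1) by (intro closure_subset[THEN subsetD]) (simp add: orbit_def)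
  show "(\<lambda>k. (lam (S k), S k x)) \<longlonglongrightarrow> (\<mu>, y)"
    using assms(2,3) by (rule tendsto_Pair)
qed

lemma Rec_imp_limit_phase:
  assumes "x \<in> Rec G"
  obtains \<mu> where "cmod \<mu> = 1" "(\<mu>, 1) \<in> limit_phases x"
proof -
  obtain T where T: "\<And>k. T k \<in> G" and lim: "(\<lambda>k. T k x) \<longlonglongrightarrow> x"
    using assms unfolding Rec_def by blast
  obtain \<mu> r where "cmod \<mu> = 1" "strict_mono r" "(\<lambda>k. lam (T (r k))) \<longlonglongrightarrow> \<mu>"
    using convergent_phase_subseq T by blast
  moreover have "(\<lambda>k. T (r k) x) \<longlonglongrightarrow> x"
    using LIMSEQ_subseq_LIMSEQ[OF lim \<open>strict_mono r\<close>] by (simp add: o_def)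
  ultimately have "(\<mu>, x) \<in> closure (orbit x)"
    using T by (intro limit_in_closure_orbit)
  then show thesis
    using that \<open>cmod \<mu> = 1\<close> by (simp add: limit_phases_def)
qed

lemma Rec_twisted_imp_limit_phase:
  assumes "x \<in> Rec twisted"
  obtains \<mu> where "cmod \<mu> = 1" "(\<mu>, cnj \<mu>) \<in> limit_phases x"
proof -
  obtain T where T: "\<And>k. T k \<in> twisted" and lim: "(\<lambda>k. T k x) \<longlonglongrightarrow> x"
    using assms unfolding Rec_def by blast
  then have "\<forall>k. \<exists>S. S \<in> G \<and> T k = (\<lambda>y. sc (lam S) (S y))"
    by blast
  then obtain S where S: "\<And>k. S k \<in> G" and T_eq: "\<And>k. T k = (\<lambda>y. sc (lam (S k)) (S k y))"
    by metis
  obtain \<mu> r where "cmod \<mu> = 1" "strict_mono r" and phase: "(\<lambda>k. lam (S (r k))) \<longlonglongrightarrow> \<mu>"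
    using convergent_phase_subseq S by blast
  have "(\<lambda>k. sc (lam (S (r k))) (S (r k) x)) \<longlonglongrightarrow> x"
    using LIMSEQ_subseq_LIMSEQ[OF lim \<open>strict_mono r\<close>] by (simp add: o_def T_eq)
  then have "(\<lambda>k. sc (cnj (lam (S (r k)))) (sc (lam (S (r k))) (S (r k) x))) \<longlonglongrightarrow> sc (cnj \<mu>) x"
    by (intro sc.tendsto tendsto_cnj phase)
  moreover have "cnj (lam (S k)) * lam (S k) = 1" for k
    using unimodular[OF S] by (simp add: complex_norm_square[symmetric] mult.commute)
  ultimately have "(\<lambda>k. S (r k) x) \<longlonglongrightarrow> sc (cnj \<mu>) x"
    by (simp add: sc_sc)
  then have "(\<mu>, sc (cnj \<mu>) x) \<in> closure (orbit x)"
    using S phase by (intro limit_in_closure_orbit)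
  then show thesis
    using that \<open>cmod \<mu> = 1\<close> by (simp add: limit_phases_def)
qed

lemma Rec_if_one_limit_phase:
  assumes "(1, 1) \<in> limit_phases x" "x \<noteq> 0"
  shows "x \<in> Rec G" "x \<in> Rec twisted"
proof -
  obtain p where "\<And>k. p k \<in> orbit x" and lim: "p \<longlonglongrightarrow> (1, x)"
    using assms(1) unfolding limit_phases_def closure_sequential by auto
  then have "\<forall>k. \<exists>S. S \<in> G \<and> p k = (lam S, S x)"
    unfolding orbit_def by blast
  then obtain S where S: "\<And>k. S k \<in> G" and p_eq: "\<And>k. p k = (lam (S k), S k x)"
    by metis
  have phase: "(\<lambda>k. lam (S k)) \<longlonglongrightarrow> 1" and orbit: "(\<lambda>k. S k x) \<longlonglongrightarrow> x"
    using tendsto_fst[OF lim] tendsto_snd[OF lim] by (simp_all add: p_eq)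
  show "x \<in> Rec G"
    using S orbit assms(2) unfolding Rec_def by blast
  have "(\<lambda>k. sc (lam (S k)) (S k x)) \<longlonglongrightarrow> sc 1 x"
    using phase orbit by (rule sc.tendsto)
  then show "x \<in> Rec twisted"
    using S assms(2) unfolding Rec_def
    by (intro CollectI conjI exI[of _ "\<lambda>k y. sc (lam (S k)) (S k y)"]) auto
qed

lemma Rec_iff_one_limit_phase: "x \<in> Rec G \<longleftrightarrow> x \<noteq> 0 \<and> (1, 1) \<in> limit_phases x"
proof
  assume x: "x \<in> Rec G"
  obtain \<mu> where "cmod \<mu> = 1" "(\<mu>, 1) \<in> limit_phases x"
    using x by (rule Rec_imp_limit_phase)
  moreover have "x \<noteq> 0"
    using x by (simp add: Rec_def)
  ultimately show "x \<noteq> 0 \<and> (1, 1) \<in> limit_phases x"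
    using one_limit_phase[of \<mu> 1] by simp
qed (use Rec_if_one_limit_phase in blast)

lemma Rec_twisted_iff_one_limit_phase: "x \<in> Rec twisted \<longleftrightarrow> x \<noteq> 0 \<and> (1, 1) \<in> limit_phases x"
proof
  assume x: "x \<in> Rec twisted"
  obtain \<mu> where "cmod \<mu> = 1" "(\<mu>, cnj \<mu>) \<in> limit_phases x"
    using x by (rule Rec_twisted_imp_limit_phase)
  moreover have "x \<noteq> 0"
    using x by (simp add: Rec_def)
  ultimately show "x \<noteq> 0 \<and> (1, 1) \<in> limit_phases x"
    using one_limit_phase[of \<mu> "cnj \<mu>"] by simp
qed (use Rec_if_one_limit_phase in blast)

end

theorem theorem2p7:
  fixes sc :: "complex \<Rightarrow> 'a::banach \<Rightarrow> 'a"
    and \<Gamma> :: "('a \<Rightarrow> 'a) set"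
    and lam :: "('a \<Rightarrow> 'a) \<Rightarrow> complex"
  assumes "complex_scaling sc"
    and "\<Gamma> \<subseteq> bounded_ops sc"
    and "\<forall>T\<in>\<Gamma>. \<forall>S\<in>\<Gamma>. T \<circ> S \<in> \<Gamma>"
    and "\<forall>T\<in>\<Gamma>. cmod (lam T) = 1"
    and "\<forall>T\<in>\<Gamma>. \<forall>S\<in>\<Gamma>. lam (T \<circ> S) = lam T * lam S"
  shows "Rec \<Gamma> = Rec ((\<lambda>T. (\<lambda>x. sc (lam T) (T x))) ` \<Gamma>)"
proof -
  interpret unimodular_character sc \<Gamma> lam
    using assms by unfold_locales auto
  show ?thesis
    by (auto simp: Rec_iff_one_limit_phase Rec_twisted_iff_one_limit_phase)
qed

end
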